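(* Let $\mathcal{H}$ be a complex Hilbert space and let $\mathcal{A}:\operatorname{dom}(\mathcal{A})\subseteq\mathcal{H}\to\mathcal{H}$ be a closed linear operator (not necessarily bounded or selfadjoint). Let $$r(z)=\omega_0+\sum_{j=1}^N\sum_{i=1}^{\nu_j}\frac{\omega_{j,i}}{(z_j-z)^i}$$ with $\omega_0,\omega_{j,i}\in\mathbb{C}$, positive integers $\nu_j$, and distinct points $z_1,\dots,z_N$ in the resolvent set $\rho(\mathcal{A})$, and let $r(\mathcal{A})=\omega_0+\sum_{j=1}^N\sum_{i=1}^{\nu_j}\omega_{j,i}R(z_j)^i$, a bounded operator on $\mathcal{H}$. Then for every $\mu\in\mathbb{C}$ with $\mu\neq\omega_0$, $$E_\mu(r(\mathcal{A}))=\bigoplus_{\lambda\in r^{-1}_\mu}E^\infty_\lambda(\mathcal{A}),$$ where the right-hand side is a direct sum.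
   Context: $R(z)=(z-\mathcal{A})^{-1}:\mathcal{H}\to\operatorname{dom}(\mathcal{A})$ denotes the resolvent for $z\in\rho(\mathcal{A})$. Set $\operatorname{dom}(\mathcal{A}^1)=\operatorname{dom}(\mathcal{A})$, $\operatorname{dom}(\mathcal{A}^n)=\{x\in\operatorname{dom}(\mathcal{A}):\mathcal{A}x\in\operatorname{dom}(\mathcal{A}^{n-1})\}$ for $n>1$, and $\operatorname{dom}(\mathcal{A}^\infty)=\bigcap_{n\ge1}\operatorname{dom}(\mathcal{A}^n)$. For $\lambda\in\mathbb{C}$, $E^\infty_\lambda(\mathcal{A})=\bigcup_{n\ge1}\{u\in\operatorname{dom}(\mathcal{A}^\infty):(\mathcal{A}-\lambda)^nu=0\}$ (trivial if $\lambda$ is not an eigenvalue). For $\mu\in\mathbb{C}$, $E_\mu(r(\mathcal{A}))=\bigcup_{n\ge1}\{u\in\mathcal{H}:(r(\mathcal{A})-\mu)^nu=0\}$. Finally $r^{-1}_\mu=\{\lambda\in\mathbb{C}\setminus\{z_1,\dots,z_N\}:\ r(\lambda)=\mu\}$. *)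

theory Defs
  imports "HOL-Analysis.Analysis"
begin

class complex_vector = real_vector +
  fixes scaleC :: "complex \<Rightarrow> 'a \<Rightarrow> 'a" (infixr "*\<^sub>C" 75)
  assumes scaleC_add_right: "a *\<^sub>C (x + y) = a *\<^sub>C x + a *\<^sub>C y"
    and scaleC_add_left: "(a + b) *\<^sub>C x = a *\<^sub>C x + b *\<^sub>C x"
    and scaleC_scaleC: "a *\<^sub>C (b *\<^sub>C x) = (a * b) *\<^sub>C x"
    and scaleC_one: "1 *\<^sub>C x = x"
    and scaleR_scaleC: "scaleR r x = complex_of_real r *\<^sub>C x"

class complex_inner = complex_vector + real_normed_vector +
  fixes cinner :: "'a \<Rightarrow> 'a \<Rightarrow> complex"
  assumes cinner_commute: "cinner x y = cnj (cinner y x)"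
    and cinner_add_left: "cinner (x + y) z = cinner x z + cinner y z"
    and cinner_scaleC_left: "cinner (a *\<^sub>C x) y = cnj a * cinner x y"
    and cinner_nonneg: "0 \<le> Re (cinner x x)"
    and cinner_eq_zero_iff: "cinner x x = 0 \<longleftrightarrow> x = 0"
    and norm_eq_sqrt_cinner: "norm x = sqrt (Re (cinner x x))"

class chilbert_space = complex_inner + complete_space

text \<open>An operator is given by a domain D and a function A (only its values on D matter).\<close>

definition csubspace :: "'a::complex_vector set \<Rightarrow> bool" where
  "csubspace D \<longleftrightarrow> 0 \<in> D \<and> (\<forall>x\<in>D. \<forall>y\<in>D. x + y \<in> D) \<and> (\<forall>c. \<forall>x\<in>D. c *\<^sub>C x \<in> D)"

definition linear_op :: "'a::complex_vector set \<Rightarrow> ('a \<Rightarrow> 'a) \<Rightarrow> bool" where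
  "linear_op D A \<longleftrightarrow> csubspace D \<and>
     (\<forall>x\<in>D. \<forall>y\<in>D. A (x + y) = A x + A y) \<and> (\<forall>c. \<forall>x\<in>D. A (c *\<^sub>C x) = c *\<^sub>C A x)"

definition closed_op :: "'a::chilbert_space set \<Rightarrow> ('a \<Rightarrow> 'a) \<Rightarrow> bool" where
  "closed_op D A \<longleftrightarrow> closed {(x, A x) | x. x \<in> D}"

definition resolvent :: "'a::complex_vector set \<Rightarrow> ('a \<Rightarrow> 'a) \<Rightarrow> complex \<Rightarrow> 'a \<Rightarrow> 'a" where
  "resolvent D A z = inv_into D (\<lambda>x. z *\<^sub>C x - A x)"

definition resolvent_set :: "'a::chilbert_space set \<Rightarrow> ('a \<Rightarrow> 'a) \<Rightarrow> complex set" where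
  "resolvent_set D A = {z. bij_betw (\<lambda>x. z *\<^sub>C x - A x) D UNIV \<and>
      (\<exists>K. \<forall>y. norm (resolvent D A z y) \<le> K * norm y)}"

fun dom_pow :: "'a set \<Rightarrow> ('a \<Rightarrow> 'a) \<Rightarrow> nat \<Rightarrow> 'a set" where
  "dom_pow D A 0 = UNIV"
| "dom_pow D A (Suc n) = {x \<in> D. A x \<in> dom_pow D A n}"

definition dom_inf :: "'a set \<Rightarrow> ('a \<Rightarrow> 'a) \<Rightarrow> 'a set" where
  "dom_inf D A = (\<Inter>n\<in>{1..}. dom_pow D A n)"

definition gen_eigenspace_inf :: "'a::complex_vector set \<Rightarrow> ('a \<Rightarrow> 'a) \<Rightarrow> complex \<Rightarrow> 'a set" where
  "gen_eigenspace_inf D A l =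
     (\<Union>n\<in>{1..}. {u \<in> dom_inf D A. ((\<lambda>x. A x - l *\<^sub>C x) ^^ n) u = 0})"

definition gen_eigenspace :: "('a::complex_vector \<Rightarrow> 'a) \<Rightarrow> complex \<Rightarrow> 'a set" where
  "gen_eigenspace T \<mu> = (\<Union>n\<in>{1..}. {u. ((\<lambda>x. T x - \<mu> *\<^sub>C x) ^^ n) u = 0})"

definition rat_fun :: "complex \<Rightarrow> (nat \<Rightarrow> nat \<Rightarrow> complex) \<Rightarrow> (nat \<Rightarrow> nat) \<Rightarrow> (nat \<Rightarrow> complex)
    \<Rightarrow> nat \<Rightarrow> complex \<Rightarrow> complex" where
  "rat_fun \<omega>0 \<omega> \<nu> zs N z = \<omega>0 + (\<Sum>j=1..N. \<Sum>i=1..\<nu> j. \<omega> j i / (zs j - z) ^ i)"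

definition rat_op :: "'a::complex_vector set \<Rightarrow> ('a \<Rightarrow> 'a) \<Rightarrow> complex \<Rightarrow> (nat \<Rightarrow> nat \<Rightarrow> complex)
    \<Rightarrow> (nat \<Rightarrow> nat) \<Rightarrow> (nat \<Rightarrow> complex) \<Rightarrow> nat \<Rightarrow> 'a \<Rightarrow> 'a" where
  "rat_op D A \<omega>0 \<omega> \<nu> zs N x =
     \<omega>0 *\<^sub>C x + (\<Sum>j=1..N. \<Sum>i=1..\<nu> j. \<omega> j i *\<^sub>C ((resolvent D A (zs j)) ^^ i) x)"

definition rat_preimage :: "complex \<Rightarrow> (nat \<Rightarrow> nat \<Rightarrow> complex) \<Rightarrow> (nat \<Rightarrow> nat) \<Rightarrow> (nat \<Rightarrow> complex)
    \<Rightarrow> nat \<Rightarrow> complex \<Rightarrow> complex set" where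
  "rat_preimage \<omega>0 \<omega> \<nu> zs N \<mu> = {z. z \<notin> zs ` {1..N} \<and> rat_fun \<omega>0 \<omega> \<nu> zs N z = \<mu>}"

definition is_direct_sum :: "'a::complex_vector set \<Rightarrow> 'b set \<Rightarrow> ('b \<Rightarrow> 'a set) \<Rightarrow> bool" where
  "is_direct_sum V S E \<longleftrightarrow>
     V = {(\<Sum>s\<in>F. f s) | F f. finite F \<and> F \<subseteq> S \<and> (\<forall>s\<in>F. f s \<in> E s)} \<and>
     (\<forall>F f. finite F \<and> F \<subseteq> S \<and> (\<forall>s\<in>F. f s \<in> E s) \<and> (\<Sum>s\<in>F. f s) = 0 \<longrightarrow> (\<forall>s\<in>F. f s = 0))"

end

theory Submission
  imports Defs "HOL-Computational_Algebra.Fundamental_Theorem_Algebra"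
    "HOL-Computational_Algebra.Field_as_Ring" "HOL-Computational_Algebra.Polynomial_Factorial"
begin

text \<open>
  Write \<open>r(z) - \<mu> = p(z) / q(z)\<close> with \<open>q(z) = \<Prod>\<^sub>j (z\<^sub>j - z) ^ \<nu>\<^sub>j\<close>.
  Since \<open>r(A) - \<omega>\<^sub>0\<close> maps \<open>dom(A^n)\<close> into \<open>dom(A^(n+1))\<close> and \<open>\<mu> \<noteq> \<omega>\<^sub>0\<close>, every
  generalized eigenvector of \<open>r(A)\<close> lies in \<open>dom(A^\<infinity>)\<close>. There \<open>(r(A) - \<mu>) q(A) = p(A)\<close>,
  \<open>r(A)\<close> commutes with \<open>A\<close>, and \<open>q(A)\<close> is injective because the \<open>z\<^sub>j\<close> are regular
  points; hence \<open>(r(A) - \<mu>)^n u = 0\<close> iff \<open>p(A)^n u = 0\<close>. Splitting \<open>p\<close> into linear factors,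
  those at the poles act injectively, and the remaining ones, located exactly at \<open>r\<^sup>-\<^sup>1(\<mu>)\<close>,
  decompose the kernel of \<open>p(A)^n\<close> into generalized eigenspaces of \<open>A\<close> by the usual Bezout
  argument for coprime polynomials.
\<close>

global_interpretation complex_vector: vector_space "scaleC :: complex \<Rightarrow> 'a \<Rightarrow> 'a::complex_vector"
  by unfold_locales (simp_all add: scaleC_add_right scaleC_add_left scaleC_scaleC scaleC_one)

lemma csubspace_iff_subspace: "csubspace V \<longleftrightarrow> complex_vector.subspace V"
  unfolding csubspace_def complex_vector.subspace_def ..

definition linear_on :: "'a::complex_vector set \<Rightarrow> ('a \<Rightarrow> 'b::complex_vector) \<Rightarrow> bool" where
  "linear_on V F \<longleftrightarrow>
     (\<forall>x\<in>V. \<forall>y\<in>V. F (x + y) = F x + F y) \<and> (\<forall>c. \<forall>x\<in>V. F (c *\<^sub>C x) = c *\<^sub>C F x)"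

lemma linear_on_add: "linear_on V F \<Longrightarrow> x \<in> V \<Longrightarrow> y \<in> V \<Longrightarrow> F (x + y) = F x + F y"
  by (simp add: linear_on_def)

lemma linear_on_scale: "linear_on V F \<Longrightarrow> x \<in> V \<Longrightarrow> F (c *\<^sub>C x) = c *\<^sub>C F x"
  by (simp add: linear_on_def)

lemma linear_on_subset: "linear_on V F \<Longrightarrow> W \<subseteq> V \<Longrightarrow> linear_on W F"
  unfolding linear_on_def by blast

context
  fixes V :: "'a::complex_vector set" and F :: "'a \<Rightarrow> 'b::complex_vector"
  assumes subspace: "complex_vector.subspace V" and linear: "linear_on V F"
begin

lemma linear_on_zero: "F 0 = 0"
  using linear_on_scale[OF linear complex_vector.subspace_0[OF subspace], of 0] by simp

lemma linear_on_neg: "x \<in> V \<Longrightarrow> F (- x) = - F x"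
  using linear_on_scale[OF linear, of x "-1"] by simp

lemma linear_on_diff: "x \<in> V \<Longrightarrow> y \<in> V \<Longrightarrow> F (x - y) = F x - F y"
  using linear_on_add[OF linear, of x "- y"] linear_on_neg[of y] complex_vector.subspace_neg[OF subspace]
  by simp

lemma linear_on_sum: "(\<And>i. i \<in> I \<Longrightarrow> f i \<in> V) \<Longrightarrow> F (\<Sum>i\<in>I. f i) = (\<Sum>i\<in>I. F (f i))"
  by (induct I rule: infinite_finite_induct)
    (simp_all add: linear_on_zero linear_on_add[OF linear] complex_vector.subspace_sum[OF subspace])

end

lemma linear_on_add_fun: "linear_on V F \<Longrightarrow> linear_on V G \<Longrightarrow> linear_on V (\<lambda>x. F x + G x)"
  by (simp add: linear_on_def complex_vector.scale_right_distrib)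

lemma linear_on_diff_fun: "linear_on V F \<Longrightarrow> linear_on V G \<Longrightarrow> linear_on V (\<lambda>x. F x - G x)"
  by (simp add: linear_on_def complex_vector.scale_right_diff_distrib)

lemma linear_on_scale_fun: "linear_on V F \<Longrightarrow> linear_on V (\<lambda>x. c *\<^sub>C F x)"
  by (simp add: linear_on_def complex_vector.scale_right_distrib mult.commute)

lemma linear_on_scale_id: "linear_on V (\<lambda>x. c *\<^sub>C x)"
  by (simp add: linear_on_def complex_vector.scale_right_distrib mult.commute)

lemma linear_on_sum_fun: "(\<And>i. i \<in> I \<Longrightarrow> linear_on V (F i)) \<Longrightarrow> linear_on V (\<lambda>x. \<Sum>i\<in>I. F i x)"
  by (induct I rule: infinite_finite_induct) (simp_all add: linear_on_add_fun, simp_all add: linear_on_def)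

lemma funpow_in: "(\<And>x. x \<in> V \<Longrightarrow> F x \<in> V) \<Longrightarrow> x \<in> V \<Longrightarrow> (F ^^ n) x \<in> V"
  by (induct n) auto

lemma funpow_commute_on:
  assumes "\<And>x. x \<in> V \<Longrightarrow> F x \<in> V" "\<And>x. x \<in> V \<Longrightarrow> F (G x) = G (F x)" "x \<in> V"
  shows "(F ^^ n) (G x) = G ((F ^^ n) x)"
  by (induct n) (simp_all add: assms funpow_in)

lemma linear_on_funpow:
  assumes "linear_on V F" "\<And>x. x \<in> V \<Longrightarrow> F x \<in> V"
  shows "linear_on V (F ^^ n)"
proof (induct n)
  case 0 then show ?case by (simp add: linear_on_def)
next
  case (Suc n)
  then show ?case
    using assms funpow_in[of V F] by (simp add: linear_on_def complex_vector.subspace_def)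
qed

section \<open>Polynomials of an operator on an invariant subspace\<close>

lemma coprime_bezout:
  fixes a b :: "'a::euclidean_ring_gcd"
  assumes "coprime a b"
  obtains s t where "s * a + t * b = 1"
proof
  show "fst (bezout_coefficients a b) * a + snd (bezout_coefficients a b) * b = 1"
    using bezout_coefficients_fst_snd[of a b] assms by simp
qed

lemma coprime_linear_factors: "a \<noteq> b \<Longrightarrow> coprime [:-a, 1:] [:-b, (1::'a::field_gcd):]"
proof (rule coprimeI)
  fix c assume ab: "a \<noteq> b" and c: "c dvd [:-a, 1:]" "c dvd [:-b, 1:]"
  from c have "c dvd [:-a, 1:] - [:-b, 1:]" by (rule dvd_diff)
  moreover have "is_unit ([:-a, 1:] - [:-b, 1:])" using ab by (simp add: is_unit_const_poly_iff dvd_field_iff)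
  ultimately show "is_unit c" by (rule dvd_unit_imp_unit)
qed

lemma coprime_linear_factor_power_prod:
  assumes "a \<notin> S"
  shows "coprime ([:-a, 1:] ^ k) (\<Prod>l\<in>S. [:-l, (1::'a::field_gcd):] ^ m l)"
  using assms by (intro prod_coprime_right) (auto intro: coprime_linear_factors)

text \<open>Horner's scheme: \<open>poly_op T p x = (\<Sum>i. coeff p i *\<^sub>C (T ^^ i) x)\<close> as long as
  \<open>x\<close> stays in a \<open>T\<close>-invariant subspace on which \<open>T\<close> is linear.\<close>
definition poly_op :: "('a::complex_vector \<Rightarrow> 'a) \<Rightarrow> complex poly \<Rightarrow> 'a \<Rightarrow> 'a" where
  "poly_op T p = fold_coeffs (\<lambda>c F x. c *\<^sub>C x + T (F x)) p (\<lambda>x. 0)"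

definition gen_eigenspace_on :: "'a::complex_vector set \<Rightarrow> ('a \<Rightarrow> 'a) \<Rightarrow> complex \<Rightarrow> 'a set" where
  "gen_eigenspace_on V T l = {u \<in> V. \<exists>n. ((\<lambda>x. T x - l *\<^sub>C x) ^^ n) u = 0}"

lemma poly_op_0 [simp]: "poly_op T 0 x = 0"
  by (simp add: poly_op_def)

locale invariant_subspace =
  fixes V :: "'a::complex_vector set" and T :: "'a \<Rightarrow> 'a"
  assumes subspace_V: "complex_vector.subspace V"
    and T_in_V: "\<And>x. x \<in> V \<Longrightarrow> T x \<in> V"
    and linear_on_T: "linear_on V T"
begin

lemma T_zero [simp]: "T 0 = 0"
  by (rule linear_on_zero[OF subspace_V linear_on_T])

lemma poly_op_pCons: "poly_op T (pCons a p) x = a *\<^sub>C x + T (poly_op T p x)"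
  by (cases "a = 0 \<and> p = 0") (auto simp: poly_op_def fold_coeffs_def cCons_def)

lemma poly_op_const [simp]: "poly_op T [:c:] x = c *\<^sub>C x"
  by (simp add: poly_op_pCons)

lemma poly_op_1 [simp]: "poly_op T 1 = (\<lambda>x. x)"
  by (rule ext) (simp add: one_pCons)

lemma poly_op_linear_factor: "poly_op T [:-l, 1:] = (\<lambda>x. T x - l *\<^sub>C x)"
  by (rule ext) (simp add: poly_op_pCons)

lemma poly_op_in: "x \<in> V \<Longrightarrow> poly_op T p x \<in> V"
  by (induct p rule: pCons_induct)
    (simp_all add: poly_op_pCons complex_vector.subspace_0[OF subspace_V] T_in_V
      complex_vector.subspace_add[OF subspace_V] complex_vector.subspace_scale[OF subspace_V])

lemma poly_op_add: "x \<in> V \<Longrightarrow> poly_op T (p + q) x = poly_op T p x + poly_op T q x"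
  by (induct p q rule: poly_induct2)
    (simp_all add: poly_op_pCons linear_on_add[OF linear_on_T] poly_op_in algebra_simps)

lemma poly_op_smult: "x \<in> V \<Longrightarrow> poly_op T (smult c p) x = c *\<^sub>C poly_op T p x"
  by (induct p rule: pCons_induct)
    (simp_all add: poly_op_pCons linear_on_scale[OF linear_on_T] poly_op_in algebra_simps)

lemma poly_op_diff: "x \<in> V \<Longrightarrow> poly_op T (p - q) x = poly_op T p x - poly_op T q x"
  using poly_op_add[of x "p - q" q] by simp

lemma poly_op_mult: "x \<in> V \<Longrightarrow> poly_op T (p * q) x = poly_op T p (poly_op T q x)"
  by (induct p rule: pCons_induct) (simp_all add: poly_op_pCons poly_op_add poly_op_smult poly_op_in)

lemma poly_op_sum: "x \<in> V \<Longrightarrow> poly_op T (\<Sum>i\<in>I. p i) x = (\<Sum>i\<in>I. poly_op T (p i) x)"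
  by (induct I rule: infinite_finite_induct) (simp_all add: poly_op_add)

lemma linear_on_poly_op: "linear_on V (poly_op T p)"
  by (induct p rule: pCons_induct)
    (auto simp: linear_on_def poly_op_pCons linear_on_add[OF linear_on_T] linear_on_scale[OF linear_on_T]
      poly_op_in complex_vector.subspace_add[OF subspace_V] complex_vector.subspace_scale[OF subspace_V]
      algebra_simps)

lemma poly_op_zero_vector [simp]: "poly_op T p 0 = 0"
  by (rule linear_on_zero[OF subspace_V linear_on_poly_op])

lemma poly_op_commute:
  assumes "linear_on V F" "\<And>x. x \<in> V \<Longrightarrow> F x \<in> V" "\<And>x. x \<in> V \<Longrightarrow> F (T x) = T (F x)"
    and "x \<in> V"
  shows "F (poly_op T p x) = poly_op T p (F x)"
  using assms(4)
proof (induct p rule: pCons_induct)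
  case 0 then show ?case using linear_on_zero[OF subspace_V assms(1)] by simp
next
  case (pCons a p)
  then show ?case
    by (simp add: poly_op_pCons linear_on_add[OF assms(1)] linear_on_scale[OF assms(1)] assms(2,3)
        poly_op_in T_in_V complex_vector.subspace_scale[OF subspace_V])
qed

lemma funpow_eq_poly_op:
  assumes "x \<in> V"
  shows "((\<lambda>x. T x - l *\<^sub>C x) ^^ n) x = poly_op T ([:-l, 1:] ^ n) x"
proof (induct n)
  case 0 then show ?case by simp
next
  case (Suc n)
  have "poly_op T ([:-l, 1:] ^ Suc n) x = poly_op T [:-l, 1:] (poly_op T ([:-l, 1:] ^ n) x)"
    by (simp only: power_Suc poly_op_mult[OF assms])
  then show ?case by (simp only: funpow.simps o_apply Suc.hyps poly_op_linear_factor)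
qed

lemma mem_gen_eigenspace_on_iff:
  "u \<in> gen_eigenspace_on V T l \<longleftrightarrow> u \<in> V \<and> (\<exists>n. poly_op T ([:-l, 1:] ^ n) u = 0)"
  by (auto simp: gen_eigenspace_on_def funpow_eq_poly_op)

lemma poly_op_power_linear_factor_mono:
  assumes "x \<in> V" "poly_op T ([:-l, 1:] ^ m) x = 0" "m \<le> n"
  shows "poly_op T ([:-l, 1:] ^ n) x = 0"
proof -
  have "[:-l, 1:] ^ n = [:-l, 1:] ^ (n - m) * [:-l, 1:] ^ m"
    using assms(3) by (simp flip: power_add)
  then show ?thesis by (simp add: poly_op_mult assms(1,2))
qed

lemma poly_op_dvd_eq_0:
  assumes "p dvd q" "x \<in> V" "poly_op T p x = 0"
  shows "poly_op T q x = 0"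
proof -
  obtain r where "q = r * p" using assms(1) by (metis dvd_def mult.commute)
  then show ?thesis by (simp add: poly_op_mult assms(2,3))
qed

lemma inj_on_poly_op_mult:
  assumes "inj_on (poly_op T p) V" "inj_on (poly_op T q) V"
  shows "inj_on (poly_op T (p * q)) V"
proof -
  have "inj_on (poly_op T p \<circ> poly_op T q) V"
    using assms by (intro comp_inj_on) (auto intro: inj_on_subset poly_op_in)
  then show ?thesis by (rule inj_on_cong[THEN iffD1, rotated]) (simp add: poly_op_mult)
qed

lemma inj_on_poly_op_power: "inj_on (poly_op T p) V \<Longrightarrow> inj_on (poly_op T (p ^ n)) V"
  by (induct n) (simp_all add: inj_on_poly_op_mult)

lemma inj_on_poly_op_prod: "(\<And>i. i \<in> I \<Longrightarrow> inj_on (poly_op T (p i)) V) \<Longrightarrow> inj_on (poly_op T (\<Prod>i\<in>I. p i)) V"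
  by (induct I rule: infinite_finite_induct) (simp_all add: inj_on_poly_op_mult)

lemma poly_op_eq_0_imp_eq_0: "inj_on (poly_op T p) V \<Longrightarrow> x \<in> V \<Longrightarrow> poly_op T p x = 0 \<Longrightarrow> x = 0"
  using inj_onD[of "poly_op T p" V x 0] complex_vector.subspace_0[OF subspace_V] by simp

subsection \<open>Primary decomposition\<close>

lemma poly_op_coprime_kernels_disjoint:
  assumes "coprime P Q" "x \<in> V" "poly_op T P x = 0" "poly_op T Q x = 0"
  shows "x = 0"
proof -
  obtain s t where "s * P + t * Q = 1" using coprime_bezout[OF assms(1)] .
  then have "x = poly_op T (s * P + t * Q) x" by simp
  also have "\<dots> = 0" using assms(2-4) by (simp add: poly_op_add poly_op_mult)
  finally show ?thesis .
qed

lemma poly_op_coprime_kernel_split: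
  assumes "coprime P Q" "x \<in> V" "poly_op T (P * Q) x = 0"
  obtains y z where "y \<in> V" "z \<in> V" "x = y + z" "poly_op T P y = 0" "poly_op T Q z = 0"
proof -
  obtain s t where st: "s * P + t * Q = 1" using coprime_bezout[OF assms(1)] .
  define y where "y = poly_op T (t * Q) x"
  define z where "z = poly_op T (s * P) x"
  have "y \<in> V" "z \<in> V" unfolding y_def z_def using assms(2) by (rule poly_op_in)+
  moreover have "x = y + z"
    using st assms(2) by (metis poly_op_1 poly_op_add add.commute y_def z_def)
  moreover have "poly_op T P y = poly_op T (t * (P * Q)) x"
    using assms(2) by (simp add: y_def ac_simps flip: poly_op_mult)
  then have "poly_op T P y = 0" using assms(2,3) by (simp add: poly_op_mult)
  moreover have "poly_op T Q z = poly_op T (s * (P * Q)) x"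
    using assms(2) by (simp add: z_def ac_simps flip: poly_op_mult)
  then have "poly_op T Q z = 0" using assms(2,3) by (simp add: poly_op_mult)
  ultimately show thesis by (rule that)
qed

lemma poly_op_kernel_prod_decomp:
  assumes "finite S"
  shows "x \<in> V \<Longrightarrow> poly_op T (\<Prod>l\<in>S. [:-l, 1:] ^ k l) x = 0 \<Longrightarrow>
    \<exists>f. (\<forall>l\<in>S. f l \<in> V \<and> poly_op T ([:-l, 1:] ^ k l) (f l) = 0) \<and> x = (\<Sum>l\<in>S. f l)"
  using assms
proof (induct S arbitrary: x rule: finite_induct)
  case empty then show ?case by simp
next
  case (insert a S)
  have "poly_op T ([:-a, 1:] ^ k a * (\<Prod>l\<in>S. [:-l, 1:] ^ k l)) x = 0"
    using insert by simp
  then obtain y z where yz: "y \<in> V" "z \<in> V" "x = y + z" "poly_op T ([:-a, 1:] ^ k a) y = 0"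
      "poly_op T (\<Prod>l\<in>S. [:-l, 1:] ^ k l) z = 0"
    by (rule poly_op_coprime_kernel_split[OF coprime_linear_factor_power_prod[OF insert(2)] insert(4)])
  obtain f where f: "\<forall>l\<in>S. f l \<in> V \<and> poly_op T ([:-l, 1:] ^ k l) (f l) = 0" "z = (\<Sum>l\<in>S. f l)"
    using insert(3)[OF yz(2,5)] by blast
  have "(\<Sum>l\<in>S. (f(a := y)) l) = (\<Sum>l\<in>S. f l)" using insert(2) by (intro sum.cong) auto
  then have "x = (\<Sum>l\<in>insert a S. (f(a := y)) l)" using insert(1,2) yz f by simp
  moreover have "\<forall>l\<in>insert a S. (f(a := y)) l \<in> V \<and> poly_op T ([:-l, 1:] ^ k l) ((f(a := y)) l) = 0"
    using f yz by auto
  ultimately show ?case by blast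
qed

lemma gen_eigenspaces_independent:
  assumes "finite F" "\<forall>l\<in>F. f l \<in> V \<and> poly_op T ([:-l, 1:] ^ n) (f l) = 0" "(\<Sum>l\<in>F. f l) = 0"
  shows "\<forall>l\<in>F. f l = 0"
  using assms
proof (induct F rule: finite_induct)
  case empty then show ?case by simp
next
  case (insert a F)
  let ?P = "\<Prod>l\<in>F. [:-l, (1::complex):] ^ n"
  have fa: "f a = - (\<Sum>l\<in>F. f l)"
    using insert(1,2,5) by (simp add: eq_neg_iff_add_eq_0)
  have "poly_op T ?P (f l) = 0" if "l \<in> F" for l
  proof -
    have "f l \<in> V" "poly_op T ([:-l, 1:] ^ n) (f l) = 0" using insert(4) that by auto
    then show ?thesis by (rule poly_op_dvd_eq_0[OF dvd_prodI[OF insert(1) that]])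
  qed
  then have P_fa: "poly_op T ?P (f a) = 0"
    unfolding fa using insert(4)
    by (simp add: linear_on_neg[OF subspace_V linear_on_poly_op] linear_on_sum[OF subspace_V linear_on_poly_op]
        complex_vector.subspace_sum[OF subspace_V])
  have fa_V: "f a \<in> V" and fa_ker: "poly_op T ([:-a, 1:] ^ n) (f a) = 0" using insert(4) by auto
  have "f a = 0"
    by (rule poly_op_coprime_kernels_disjoint[OF coprime_linear_factor_power_prod[OF insert(2)] fa_V fa_ker P_fa])
  moreover from this have "(\<Sum>l\<in>F. f l) = 0"
    using fa by (metis neg_equal_0_iff_equal)
  then have "\<forall>l\<in>F. f l = 0"
    using insert(4) by (intro insert(3)) auto
  ultimately show ?case by simp
qed

lemma gen_eigenspace_on_common_exponent:
  assumes "finite F" "\<forall>l\<in>F. f l \<in> gen_eigenspace_on V T l"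
  obtains n where "\<forall>l\<in>F. f l \<in> V \<and> poly_op T ([:-l, 1:] ^ n) (f l) = 0"
proof -
  obtain m where m: "\<forall>l\<in>F. f l \<in> V \<and> poly_op T ([:-l, 1:] ^ m l) (f l) = 0"
    using assms(2) unfolding mem_gen_eigenspace_on_iff by metis
  have "m l \<le> (\<Sum>l\<in>F. m l)" if "l \<in> F" for l
    using assms(1) that by (auto intro: member_le_sum)
  then show ?thesis
    using m poly_op_power_linear_factor_mono by (intro that[of "\<Sum>l\<in>F. m l"]) blast
qed

lemma poly_op_power_kernel_decomp:
  fixes P :: "complex poly"
  assumes "P \<noteq> 0" "S \<subseteq> {z. poly P z = 0}"
    and "\<And>z. poly P z = 0 \<Longrightarrow> z \<notin> S \<Longrightarrow> inj_on (\<lambda>x. T x - z *\<^sub>C x) V"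
    and u: "u \<in> V" "poly_op T (P ^ n) u = 0"
  obtains f where "\<forall>l\<in>S. f l \<in> gen_eigenspace_on V T l" "u = (\<Sum>l\<in>S. f l)"
proof -
  define Z where "Z = {z. poly P z = 0}"
  have "finite Z" unfolding Z_def using poly_roots_finite[OF assms(1)] .
  then have fin: "finite S" "finite (Z - S)" using assms(2) Z_def finite_subset by auto
  define W where "W = (\<Prod>z\<in>Z - S. [:-z, 1:] ^ order z P)"
  define G where "G = (\<Prod>z\<in>S. [:-z, 1:] ^ (order z P * n))"
  have "(\<Prod>z\<in>Z. [:-z, 1:] ^ order z P) = W * (\<Prod>z\<in>S. [:-z, 1:] ^ order z P)"
    unfolding W_def using fin assms(2) Z_def by (subst prod.subset_diff[of S Z]) auto
  then have "P = smult (lead_coeff P) (W * (\<Prod>z\<in>S. [:-z, 1:] ^ order z P))"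
    unfolding Z_def using complex_poly_decompose[of P] by simp
  then have "P ^ n = (smult (lead_coeff P) (W * (\<Prod>z\<in>S. [:-z, 1:] ^ order z P))) ^ n"
    by (rule arg_cong)
  also have "\<dots> = smult (lead_coeff P ^ n) (W ^ n * (\<Prod>z\<in>S. [:-z, 1:] ^ order z P) ^ n)"
    by (simp only: smult_power power_mult_distrib)
  also have "(\<Prod>z\<in>S. [:-z, 1:] ^ order z P) ^ n = G"
    unfolding G_def by (simp only: prod_power_distrib power_mult)
  finally have "lead_coeff P ^ n *\<^sub>C poly_op T (W ^ n) (poly_op T G u) = 0"
    using u by (simp add: poly_op_smult poly_op_mult)
  moreover have "inj_on (poly_op T (W ^ n)) V"
    unfolding W_def using assms(3) Z_def
    by (intro inj_on_poly_op_power inj_on_poly_op_prod) (simp add: poly_op_linear_factor)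
  ultimately have "poly_op T G u = 0"
    using assms(1) u by (auto intro: poly_op_eq_0_imp_eq_0 poly_op_in)
  then obtain f where f: "\<forall>l\<in>S. f l \<in> V \<and> poly_op T ([:-l, 1:] ^ (order l P * n)) (f l) = 0"
      "u = (\<Sum>l\<in>S. f l)"
    using poly_op_kernel_prod_decomp[OF fin(1) u(1), of "\<lambda>z. order z P * n"] unfolding G_def by blast
  then show thesis
    by (intro that) (auto simp: mem_gen_eigenspace_on_iff)
qed

lemma poly_op_power_sum_gen_eigenspaces:
  fixes P :: "complex poly"
  assumes "finite F" "F \<subseteq> {z. poly P z = 0}" "\<forall>l\<in>F. f l \<in> gen_eigenspace_on V T l"
  obtains n where "poly_op T (P ^ n) (\<Sum>l\<in>F. f l) = 0"
proof -
  obtain n where n: "\<forall>l\<in>F. f l \<in> V \<and> poly_op T ([:-l, 1:] ^ n) (f l) = 0"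
    using gen_eigenspace_on_common_exponent[OF assms(1,3)] by blast
  have "poly_op T (P ^ n) (f l) = 0" if "l \<in> F" for l
  proof (rule poly_op_dvd_eq_0)
    have "poly P l = 0" using that assms(2) by blast
    then show "[:-l, 1:] ^ n dvd P ^ n" by (simp add: poly_eq_0_iff_dvd dvd_power_same)
  qed (use n that in auto)
  then show thesis
    using n by (intro that[of n]) (simp add: linear_on_sum[OF subspace_V linear_on_poly_op])
qed

theorem is_direct_sum_poly_op_kernel:
  fixes P :: "complex poly"
  assumes "P \<noteq> 0" "S \<subseteq> {z. poly P z = 0}"
    and "\<And>z. poly P z = 0 \<Longrightarrow> z \<notin> S \<Longrightarrow> inj_on (\<lambda>x. T x - z *\<^sub>C x) V"
  shows "is_direct_sum {u \<in> V. \<exists>n. poly_op T (P ^ n) u = 0} S (gen_eigenspace_on V T)"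
  unfolding is_direct_sum_def
proof (intro conjI allI impI)
  have fin: "finite S" using finite_subset[OF assms(2) poly_roots_finite[OF assms(1)]] .
  show "{u \<in> V. \<exists>n. poly_op T (P ^ n) u = 0} =
    {\<Sum>s\<in>F. f s |F f. finite F \<and> F \<subseteq> S \<and> (\<forall>s\<in>F. f s \<in> gen_eigenspace_on V T s)}"
    (is "?K = ?R")
  proof
    show "?K \<subseteq> ?R"
    proof
      fix u assume "u \<in> ?K"
      then obtain n where u: "u \<in> V" "poly_op T (P ^ n) u = 0" by blast
      obtain f where "\<forall>l\<in>S. f l \<in> gen_eigenspace_on V T l" "u = (\<Sum>l\<in>S. f l)"
        using poly_op_power_kernel_decomp[OF assms u] .
      then show "u \<in> ?R" using fin by blast
    qed
    show "?R \<subseteq> ?K"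
    proof
      fix u assume "u \<in> ?R"
      then obtain F f where F: "u = (\<Sum>s\<in>F. f s)" "finite F" "F \<subseteq> S"
        "\<forall>s\<in>F. f s \<in> gen_eigenspace_on V T s" by blast
      have "F \<subseteq> {z. poly P z = 0}" using F(3) assms(2) by blast
      then obtain n where "poly_op T (P ^ n) (\<Sum>s\<in>F. f s) = 0"
        using poly_op_power_sum_gen_eigenspaces[OF F(2) _ F(4)] by blast
      moreover have "(\<Sum>s\<in>F. f s) \<in> V"
        using F(4) by (auto simp: gen_eigenspace_on_def intro: complex_vector.subspace_sum[OF subspace_V])
      ultimately show "u \<in> ?K" unfolding F(1) by blast
    qed
  qed
next
  fix F f
  assume "finite F \<and> F \<subseteq> S \<and> (\<forall>s\<in>F. f s \<in> gen_eigenspace_on V T s) \<and> (\<Sum>s\<in>F. f s) = 0"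
  then show "\<forall>s\<in>F. f s = 0"
    using gen_eigenspace_on_common_exponent[of F f] gen_eigenspaces_independent[of F f] by blast
qed

end

section \<open>Partial fractions\<close>

locale partial_fraction =
  fixes \<omega>0 :: complex and \<omega> :: "nat \<Rightarrow> nat \<Rightarrow> complex" and \<nu> :: "nat \<Rightarrow> nat"
    and zs :: "nat \<Rightarrow> complex" and N :: nat
begin

definition denom :: "complex poly" where
  "denom = (\<Prod>j\<in>{1..N}. [:zs j, -1:] ^ \<nu> j)"

definition cofactor :: "nat \<Rightarrow> nat \<Rightarrow> complex poly" where
  "cofactor j i = [:zs j, -1:] ^ (\<nu> j - i) * (\<Prod>k\<in>{1..N} - {j}. [:zs k, -1:] ^ \<nu> k)"

definition numer :: "complex poly" where
  "numer = smult \<omega>0 denom + (\<Sum>j=1..N. \<Sum>i=1..\<nu> j. smult (\<omega> j i) (cofactor j i))"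

lemma denom_eq_cofactor:
  assumes "j \<in> {1..N}" "i \<le> \<nu> j"
  shows "denom = [:zs j, -1:] ^ i * cofactor j i"
proof -
  have "denom = [:zs j, -1:] ^ \<nu> j * (\<Prod>k\<in>{1..N} - {j}. [:zs k, -1:] ^ \<nu> k)"
    unfolding denom_def using assms(1) by (simp add: prod.remove)
  also have "[:zs j, -1:] ^ \<nu> j = [:zs j, -1:] ^ i * [:zs j, -1:] ^ (\<nu> j - i)"
    using assms(2) by (simp flip: power_add)
  finally show ?thesis unfolding cofactor_def by (simp only: mult.assoc)
qed

lemma denom_nonzero: "denom \<noteq> 0"
  unfolding denom_def by (simp add: prod_zero_iff)

lemma poly_denom_nonzero: "l \<notin> zs ` {1..N} \<Longrightarrow> poly denom l \<noteq> 0"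
  unfolding denom_def by (auto simp: poly_prod prod_zero_iff)

lemma poly_numer:
  assumes l: "l \<notin> zs ` {1..N}"
  shows "poly numer l = rat_fun \<omega>0 \<omega> \<nu> zs N l * poly denom l"
proof -
  have "poly (cofactor j i) l = poly denom l / (zs j - l) ^ i" if "j \<in> {1..N}" "i \<in> {1..\<nu> j}" for j i
    using denom_eq_cofactor[OF that(1), of i] that l by auto
  then show ?thesis
    unfolding numer_def rat_fun_def
    by (simp add: poly_sum algebra_simps sum_distrib_left sum_distrib_right)
qed

lemma numer_minus_denom_nonzero:
  assumes "\<mu> \<noteq> \<omega>0"
  shows "numer - smult \<mu> denom \<noteq> 0"
proof -
  have "coeff (cofactor j i) (degree denom) = 0" if "j \<in> {1..N}" "i \<in> {1..\<nu> j}" for j i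
  proof -
    have q: "denom = [:zs j, -1:] ^ i * cofactor j i"
      using denom_eq_cofactor[OF that(1)] that(2) by simp
    then have "degree denom = i + degree (cofactor j i)"
      using denom_nonzero by (simp add: degree_mult_eq degree_power_eq)
    then show ?thesis using that(2) by (intro coeff_eq_0) auto
  qed
  then have "coeff (numer - smult \<mu> denom) (degree denom) = (\<omega>0 - \<mu>) * lead_coeff denom"
    unfolding numer_def by (simp add: coeff_sum algebra_simps)
  also have "\<dots> \<noteq> 0" using assms denom_nonzero by simp
  finally show ?thesis by auto
qed

lemma rat_preimage_eq_roots:
  "rat_preimage \<omega>0 \<omega> \<nu> zs N \<mu> = {l. poly (numer - smult \<mu> denom) l = 0} - zs ` {1..N}"
  unfolding rat_preimage_def using poly_numer poly_denom_nonzero by (auto simp: algebra_simps)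

end

locale linear_operator =
  fixes D :: "'a::complex_vector set" and A :: "'a \<Rightarrow> 'a"
  assumes linear_op: "linear_op D A"
begin

lemma subspace_D: "complex_vector.subspace D"
  using linear_op by (simp add: linear_op_def csubspace_iff_subspace)

lemma linear_on_A: "linear_on D A"
  using linear_op by (simp add: linear_op_def linear_on_def)

lemma A_zero: "A 0 = 0"
  by (rule linear_on_zero[OF subspace_D linear_on_A])

lemma subspace_dom_pow: "complex_vector.subspace (dom_pow D A n)"
proof (induct n)
  case 0 then show ?case by simp
next
  case (Suc n)
  then show ?case
    using subspace_D A_zero
    by (auto simp: complex_vector.subspace_def linear_on_add[OF linear_on_A] linear_on_scale[OF linear_on_A])
qed

lemma dom_pow_Suc_subset: "dom_pow D A (Suc n) \<subseteq> dom_pow D A n"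
  by (induct n) auto

lemma mem_dom_inf_iff: "x \<in> dom_inf D A \<longleftrightarrow> (\<forall>n. x \<in> dom_pow D A n)"
  unfolding dom_inf_def
proof (intro iffI allI)
  fix n assume "x \<in> (\<Inter>n\<in>{1..}. dom_pow D A n)"
  then show "x \<in> dom_pow D A n" by (cases "n = 0") auto
qed auto

lemma dom_inf_subset_D: "x \<in> dom_inf D A \<Longrightarrow> x \<in> D"
  unfolding mem_dom_inf_iff by (metis dom_pow.simps(2) mem_Collect_eq)

sublocale dom_inf: invariant_subspace "dom_inf D A" A
proof
  show "complex_vector.subspace (dom_inf D A)"
    by (rule complex_vector.subspaceI)
      (auto simp: mem_dom_inf_iff intro: complex_vector.subspace_0[OF subspace_dom_pow]
        complex_vector.subspace_add[OF subspace_dom_pow] complex_vector.subspace_scale[OF subspace_dom_pow])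
  show "A x \<in> dom_inf D A" if "x \<in> dom_inf D A" for x
    using that unfolding mem_dom_inf_iff by (metis dom_pow.simps(2) mem_Collect_eq)
  show "linear_on (dom_inf D A) A"
    using linear_on_subset[OF linear_on_A] dom_inf_subset_D by blast
qed

lemma gen_eigenspace_inf_eq: "gen_eigenspace_inf D A = gen_eigenspace_on (dom_inf D A) A"
proof (intro ext set_eqI iffI)
  fix l u
  assume "u \<in> gen_eigenspace_on (dom_inf D A) A l"
  then obtain n where "u \<in> dom_inf D A" "((\<lambda>x. A x - l *\<^sub>C x) ^^ n) u = 0"
    unfolding gen_eigenspace_on_def by blast
  then have "u \<in> dom_inf D A" "((\<lambda>x. A x - l *\<^sub>C x) ^^ Suc n) u = 0"
    by simp_all
  then show "u \<in> gen_eigenspace_inf D A l"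
    unfolding gen_eigenspace_inf_def by force
qed (auto simp: gen_eigenspace_inf_def gen_eigenspace_on_def)

lemma poly_op_regular_factor: "x \<in> D \<Longrightarrow> poly_op A [:z, -1:] x = z *\<^sub>C x - A x"
  using linear_on_scale[OF linear_on_A, of x "-1"] by (simp add: dom_inf.poly_op_pCons)

context
  fixes z
  assumes regular: "bij_betw (\<lambda>x. z *\<^sub>C x - A x) D UNIV"
begin

lemma resolvent_in_D: "resolvent D A z y \<in> D"
  using regular unfolding resolvent_def by (metis bij_betw_imp_surj_on inv_into_into UNIV_I)

lemma resolvent_right_inverse: "z *\<^sub>C resolvent D A z y - A (resolvent D A z y) = y"
  using f_inv_into_f[of y "\<lambda>x. z *\<^sub>C x - A x" D] bij_betw_imp_surj_on[OF regular]
  unfolding resolvent_def by simp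

lemma resolvent_eqI: "u \<in> D \<Longrightarrow> z *\<^sub>C u - A u = y \<Longrightarrow> resolvent D A z y = u"
  using regular unfolding resolvent_def bij_betw_def by (auto intro: inv_into_f_f)

lemma resolvent_left_inverse: "x \<in> D \<Longrightarrow> resolvent D A z (z *\<^sub>C x - A x) = x"
  by (rule resolvent_eqI) simp_all

lemma linear_on_resolvent: "linear_on UNIV (resolvent D A z)"
proof -
  have "linear_on D (\<lambda>x. z *\<^sub>C x - A x)"
    using subspace_D
    by (auto simp: linear_on_def linear_on_add[OF linear_on_A] linear_on_scale[OF linear_on_A]
        algebra_simps)
  then show ?thesis
    unfolding linear_on_def
    by (auto intro!: resolvent_eqI simp: resolvent_in_D resolvent_right_inverse linear_on_add
        linear_on_scale complex_vector.subspace_add[OF subspace_D] complex_vector.subspace_scale[OF subspace_D])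
qed

lemma A_resolvent: "A (resolvent D A z x) = z *\<^sub>C resolvent D A z x - x"
  using resolvent_right_inverse[of x] by (simp add: algebra_simps)

lemma resolvent_dom_pow: "x \<in> dom_pow D A m \<Longrightarrow> resolvent D A z x \<in> dom_pow D A (Suc m)"
proof (induct m arbitrary: x)
  case 0 then show ?case using resolvent_in_D by simp
next
  case (Suc m)
  have "resolvent D A z x \<in> dom_pow D A (Suc m)"
    using Suc dom_pow_Suc_subset by blast
  then have "A (resolvent D A z x) \<in> dom_pow D A (Suc m)"
    unfolding A_resolvent using Suc.prems
    by (intro complex_vector.subspace_diff[OF subspace_dom_pow] complex_vector.subspace_scale[OF subspace_dom_pow])
  then show ?case using resolvent_in_D by simp
qed

lemma resolvent_in_dom_inf: "x \<in> dom_inf D A \<Longrightarrow> resolvent D A z x \<in> dom_inf D A"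
  unfolding mem_dom_inf_iff using resolvent_dom_pow dom_pow_Suc_subset by blast

lemma resolvent_commute_A:
  assumes "x \<in> dom_inf D A"
  shows "resolvent D A z (A x) = A (resolvent D A z x)"
proof (rule resolvent_eqI)
  have Rx: "resolvent D A z x \<in> dom_inf D A" using resolvent_in_dom_inf[OF assms] .
  then show "A (resolvent D A z x) \<in> D"
    by (intro dom_inf_subset_D dom_inf.T_in_V)
  have "z *\<^sub>C A (resolvent D A z x) - A (A (resolvent D A z x)) = A (z *\<^sub>C resolvent D A z x - A (resolvent D A z x))"
    using Rx dom_inf.T_in_V
    by (simp add: linear_on_diff[OF dom_inf.subspace_V dom_inf.linear_on_T] linear_on_scale[OF dom_inf.linear_on_T]
        complex_vector.subspace_scale[OF dom_inf.subspace_V])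
  then show "z *\<^sub>C A (resolvent D A z x) - A (A (resolvent D A z x)) = A x"
    by (simp add: resolvent_right_inverse)
qed

lemma inj_on_poly_op_regular_factor: "inj_on (poly_op A [:z, -1:]) (dom_inf D A)"
proof -
  have "inj_on (\<lambda>x. z *\<^sub>C x - A x) (dom_inf D A)"
    using bij_betw_imp_inj_on[OF regular] dom_inf_subset_D by (auto intro: inj_on_subset)
  then show ?thesis
    by (rule inj_on_cong[THEN iffD1, rotated]) (simp add: poly_op_regular_factor dom_inf_subset_D)
qed

lemma inj_on_A_minus_regular: "inj_on (\<lambda>x. A x - z *\<^sub>C x) (dom_inf D A)"
  using inj_on_poly_op_regular_factor
  by (auto simp: inj_on_def poly_op_regular_factor dom_inf_subset_D) (metis minus_diff_eq)

lemma linear_on_resolvent_power: "linear_on UNIV (resolvent D A z ^^ i)"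
  by (rule linear_on_funpow[OF linear_on_resolvent]) simp

lemma resolvent_power_in_dom_inf: "x \<in> dom_inf D A \<Longrightarrow> (resolvent D A z ^^ i) x \<in> dom_inf D A"
  by (rule funpow_in[OF resolvent_in_dom_inf])

lemma resolvent_power_commute_A:
  "x \<in> dom_inf D A \<Longrightarrow> (resolvent D A z ^^ i) (A x) = A ((resolvent D A z ^^ i) x)"
  by (rule funpow_commute_on[of "dom_inf D A" "resolvent D A z" A])
    (simp_all add: resolvent_in_dom_inf resolvent_commute_A)

lemma resolvent_power_dom_pow:
  assumes "0 < i" "x \<in> dom_pow D A m"
  shows "(resolvent D A z ^^ i) x \<in> dom_pow D A (Suc m)"
proof -
  obtain k where i: "i = Suc k" using assms(1) gr0_implies_Suc by blast
  have "(resolvent D A z ^^ k) x \<in> dom_pow D A m"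
    using assms(2) resolvent_dom_pow dom_pow_Suc_subset by (intro funpow_in) blast+
  then show ?thesis unfolding i funpow.simps(2) o_apply by (rule resolvent_dom_pow)
qed

lemma resolvent_power_poly_op:
  "y \<in> dom_inf D A \<Longrightarrow> (resolvent D A z ^^ i) (poly_op A ([:z, -1:] ^ i) y) = y"
proof (induct i arbitrary: y)
  case 0 then show ?case by simp
next
  case (Suc i)
  have "(resolvent D A z ^^ Suc i) (poly_op A ([:z, -1:] ^ Suc i) y)
      = (resolvent D A z ^^ i) (resolvent D A z (poly_op A [:z, -1:] (poly_op A ([:z, -1:] ^ i) y)))"
    by (simp only: funpow_Suc_right o_apply power_Suc dom_inf.poly_op_mult[OF Suc.prems])
  also have "\<dots> = (resolvent D A z ^^ i) (poly_op A ([:z, -1:] ^ i) y)"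
    using Suc.prems dom_inf.poly_op_in dom_inf_subset_D
    by (simp add: poly_op_regular_factor resolvent_left_inverse)
  finally show ?case using Suc by simp
qed

end

end

section \<open>The operator \<open>r(A)\<close>\<close>

locale rational_resolvent = linear_operator + partial_fraction +
  assumes regular_poles: "\<And>j. j \<in> {1..N} \<Longrightarrow> bij_betw (\<lambda>x. zs j *\<^sub>C x - A x) D UNIV"
begin

abbreviation r_A :: "'a \<Rightarrow> 'a" where
  "r_A \<equiv> rat_op D A \<omega>0 \<omega> \<nu> zs N"

abbreviation r_A_minus :: "complex \<Rightarrow> 'a \<Rightarrow> 'a" where
  "r_A_minus \<mu> \<equiv> \<lambda>x. r_A x - \<mu> *\<^sub>C x"

lemma linear_on_r_A: "linear_on UNIV r_A"
  unfolding rat_op_def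
  by (intro linear_on_add_fun linear_on_scale_id linear_on_sum_fun linear_on_scale_fun
      linear_on_resolvent_power regular_poles) auto

lemma r_A_zero: "r_A 0 = 0"
  by (rule linear_on_zero[OF complex_vector.subspace_UNIV linear_on_r_A])

lemma r_A_in_dom_inf: "x \<in> dom_inf D A \<Longrightarrow> r_A x \<in> dom_inf D A"
  unfolding rat_op_def
  by (intro complex_vector.subspace_add[OF dom_inf.subspace_V] complex_vector.subspace_scale[OF dom_inf.subspace_V]
      complex_vector.subspace_sum[OF dom_inf.subspace_V] resolvent_power_in_dom_inf regular_poles) auto

lemma r_A_commute_A:
  assumes x: "x \<in> dom_inf D A"
  shows "r_A (A x) = A (r_A x)"
proof -
  note subspace = dom_inf.subspace_V and linear = dom_inf.linear_on_T
  let ?S = "\<lambda>j. \<Sum>i=1..\<nu> j. \<omega> j i *\<^sub>C (resolvent D A (zs j) ^^ i) x"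
  have R_in: "(resolvent D A (zs j) ^^ i) x \<in> dom_inf D A" if "j \<in> {1..N}" for i j
    using resolvent_power_in_dom_inf[OF regular_poles[OF that] x] .
  have S_in: "?S j \<in> dom_inf D A" if "j \<in> {1..N}" for j
    using R_in[OF that]
    by (intro complex_vector.subspace_sum[OF subspace] complex_vector.subspace_scale[OF subspace])
  have A_S: "A (?S j) = (\<Sum>i=1..\<nu> j. \<omega> j i *\<^sub>C (resolvent D A (zs j) ^^ i) (A x))"
    if "j \<in> {1..N}" for j
    using R_in[OF that]
    by (simp add: linear_on_sum[OF subspace linear] linear_on_scale[OF linear]
        complex_vector.subspace_scale[OF subspace] resolvent_power_commute_A[OF regular_poles[OF that] x])
  have "(\<Sum>j=1..N. ?S j) \<in> dom_inf D A"
    using S_in by (rule complex_vector.subspace_sum[OF subspace])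
  then have "A (r_A x) = A (\<omega>0 *\<^sub>C x) + A (\<Sum>j=1..N. ?S j)"
    unfolding rat_op_def using x by (simp add: linear_on_add[OF linear] complex_vector.subspace_scale[OF subspace])
  also have "A (\<Sum>j=1..N. ?S j) = (\<Sum>j=1..N. A (?S j))"
    using linear_on_sum[OF subspace linear S_in] .
  also have "(\<Sum>j=1..N. A (?S j)) = (\<Sum>j=1..N. \<Sum>i=1..\<nu> j. \<omega> j i *\<^sub>C (resolvent D A (zs j) ^^ i) (A x))"
    using A_S by (rule sum.cong[OF refl])
  also have "A (\<omega>0 *\<^sub>C x) = \<omega>0 *\<^sub>C A x"
    by (rule linear_on_scale[OF linear x])
  finally show ?thesis unfolding rat_op_def by simp
qed

lemma r_A_minus_const_dom_pow:
  assumes "x \<in> dom_pow D A m"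
  shows "r_A x - \<omega>0 *\<^sub>C x \<in> dom_pow D A (Suc m)"
proof -
  have "r_A x - \<omega>0 *\<^sub>C x = (\<Sum>j=1..N. \<Sum>i=1..\<nu> j. \<omega> j i *\<^sub>C (resolvent D A (zs j) ^^ i) x)"
    unfolding rat_op_def by simp
  also have "\<dots> \<in> dom_pow D A (Suc m)"
    using assms
    by (intro complex_vector.subspace_sum[OF subspace_dom_pow] complex_vector.subspace_scale[OF subspace_dom_pow]
        resolvent_power_dom_pow[OF regular_poles]) auto
  finally show ?thesis .
qed

text \<open>Since \<open>r(A) - \<omega>0\<close> gains one degree of regularity, \<open>r(A) - \<mu>\<close> with \<open>\<mu> \<noteq> \<omega>0\<close> cannot
  lose any.\<close>
lemma r_A_minus_reflects_dom_pow:
  assumes "\<mu> \<noteq> \<omega>0"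
  shows "r_A_minus \<mu> x \<in> dom_pow D A m \<Longrightarrow> x \<in> dom_pow D A m"
proof (induct m)
  case 0 then show ?case by simp
next
  case (Suc m)
  then have x: "x \<in> dom_pow D A m" using dom_pow_Suc_subset by blast
  have "(\<omega>0 - \<mu>) *\<^sub>C x = r_A_minus \<mu> x - (r_A x - \<omega>0 *\<^sub>C x)"
    by (simp add: algebra_simps)
  also have "\<dots> \<in> dom_pow D A (Suc m)"
    using Suc.prems r_A_minus_const_dom_pow[OF x] by (rule complex_vector.subspace_diff[OF subspace_dom_pow])
  finally have "inverse (\<omega>0 - \<mu>) *\<^sub>C (\<omega>0 - \<mu>) *\<^sub>C x \<in> dom_pow D A (Suc m)"
    by (rule complex_vector.subspace_scale[OF subspace_dom_pow])
  then show ?case using assms by simp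
qed

lemma funpow_r_A_minus_reflects_dom_pow:
  assumes "\<mu> \<noteq> \<omega>0"
  shows "(r_A_minus \<mu> ^^ n) x \<in> dom_pow D A m \<Longrightarrow> x \<in> dom_pow D A m"
  by (induct n arbitrary: x) (auto simp only: funpow_Suc_right o_apply funpow_0
      dest: r_A_minus_reflects_dom_pow[OF assms])

lemma funpow_r_A_minus_eq_0_imp_dom_inf:
  assumes "\<mu> \<noteq> \<omega>0" "(r_A_minus \<mu> ^^ n) u = 0"
  shows "u \<in> dom_inf D A"
  unfolding mem_dom_inf_iff
  using funpow_r_A_minus_reflects_dom_pow[OF assms(1)] assms(2) complex_vector.subspace_0[OF subspace_dom_pow]
  by metis

lemma r_A_poly_op_denom:
  assumes u: "u \<in> dom_inf D A"
  shows "r_A (poly_op A denom u) = poly_op A numer u"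
proof -
  have "(resolvent D A (zs j) ^^ i) (poly_op A denom u) = poly_op A (cofactor j i) u"
    if "j \<in> {1..N}" "i \<in> {1..\<nu> j}" for j i
    using denom_eq_cofactor[OF that(1), of i] that
      resolvent_power_poly_op[OF regular_poles[OF that(1)] dom_inf.poly_op_in[OF u]]
    by (simp add: dom_inf.poly_op_mult[OF u])
  then show ?thesis
    unfolding rat_op_def numer_def using u
    by (simp add: dom_inf.poly_op_add dom_inf.poly_op_smult dom_inf.poly_op_sum)
qed

text \<open>The polynomial identity \<open>(r - \<mu>) q = numer - \<mu> q\<close> lifted to the operators; the powers
  of \<open>q(A)\<close> can be collected on one side because \<open>r(A)\<close> commutes with \<open>A\<close>.\<close>
lemma poly_op_power_numer_minus_denom:
  assumes u: "u \<in> dom_inf D A"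
  shows "poly_op A ((numer - smult \<mu> denom) ^ n) u = poly_op A (denom ^ n) ((r_A_minus \<mu> ^^ n) u)"
proof (induct n)
  case 0 then show ?case by simp
next
  case (Suc n)
  let ?w = "(r_A_minus \<mu> ^^ n) u"
  have L_in: "r_A_minus \<mu> x \<in> dom_inf D A" if "x \<in> dom_inf D A" for x
    using that r_A_in_dom_inf by (simp add: complex_vector.subspace_diff[OF dom_inf.subspace_V]
        complex_vector.subspace_scale[OF dom_inf.subspace_V])
  have L_lin: "linear_on (dom_inf D A) (r_A_minus \<mu>)"
    using linear_on_subset[OF linear_on_diff_fun[OF linear_on_r_A linear_on_scale_id]] by blast
  have L_comm: "r_A_minus \<mu> (A x) = A (r_A_minus \<mu> x)" if "x \<in> dom_inf D A" for x
    using that r_A_commute_A r_A_in_dom_inf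
    by (simp add: linear_on_diff[OF dom_inf.subspace_V dom_inf.linear_on_T] linear_on_scale[OF dom_inf.linear_on_T]
        complex_vector.subspace_scale[OF dom_inf.subspace_V])
  have w: "?w \<in> dom_inf D A" using funpow_in[OF L_in u] .
  have "poly_op A ((numer - smult \<mu> denom) ^ Suc n) u
      = poly_op A (numer - smult \<mu> denom) (poly_op A (denom ^ n) ?w)"
    using u by (simp add: dom_inf.poly_op_mult Suc)
  also have "\<dots> = r_A_minus \<mu> (poly_op A (denom ^ Suc n) ?w)"
    using w dom_inf.poly_op_in
    by (simp add: dom_inf.poly_op_diff dom_inf.poly_op_smult dom_inf.poly_op_mult r_A_poly_op_denom)
  also have "\<dots> = poly_op A (denom ^ Suc n) ((r_A_minus \<mu> ^^ Suc n) u)"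
    using dom_inf.poly_op_commute[OF L_lin L_in L_comm w] by simp
  finally show ?case .
qed

lemma funpow_r_A_minus_eq_0_iff:
  assumes "u \<in> dom_inf D A"
  shows "(r_A_minus \<mu> ^^ n) u = 0 \<longleftrightarrow> poly_op A ((numer - smult \<mu> denom) ^ n) u = 0"
proof -
  have "inj_on (poly_op A (denom ^ n)) (dom_inf D A)"
    unfolding denom_def
    by (intro dom_inf.inj_on_poly_op_power dom_inf.inj_on_poly_op_prod
        inj_on_poly_op_regular_factor regular_poles)
  moreover have "(r_A_minus \<mu> ^^ n) u \<in> dom_inf D A"
    using assms r_A_in_dom_inf
    by (intro funpow_in) (simp_all add: complex_vector.subspace_diff[OF dom_inf.subspace_V]
        complex_vector.subspace_scale[OF dom_inf.subspace_V])
  ultimately show ?thesis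
    unfolding poly_op_power_numer_minus_denom[OF assms]
    using dom_inf.poly_op_eq_0_imp_eq_0 by auto
qed

lemma gen_eigenspace_r_A:
  assumes "\<mu> \<noteq> \<omega>0"
  shows "gen_eigenspace r_A \<mu> =
    {u \<in> dom_inf D A. \<exists>n. poly_op A ((numer - smult \<mu> denom) ^ n) u = 0}"
proof (intro set_eqI iffI)
  fix u assume "u \<in> gen_eigenspace r_A \<mu>"
  then obtain n where "(r_A_minus \<mu> ^^ n) u = 0" unfolding gen_eigenspace_def by blast
  then show "u \<in> {u \<in> dom_inf D A. \<exists>n. poly_op A ((numer - smult \<mu> denom) ^ n) u = 0}"
    using funpow_r_A_minus_eq_0_imp_dom_inf[OF assms] funpow_r_A_minus_eq_0_iff by blast
next
  fix u assume "u \<in> {u \<in> dom_inf D A. \<exists>n. poly_op A ((numer - smult \<mu> denom) ^ n) u = 0}"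
  then obtain n where "(r_A_minus \<mu> ^^ n) u = 0" using funpow_r_A_minus_eq_0_iff by blast
  then have "(r_A_minus \<mu> ^^ Suc n) u = 0"
    by (simp only: funpow.simps(2) o_apply r_A_zero complex_vector.scale_zero_right diff_zero)
  then show "u \<in> gen_eigenspace r_A \<mu>" unfolding gen_eigenspace_def by (intro UN_I[of "Suc n"]) auto
qed

end

theorem lemma2p1:
  fixes D :: "'a::chilbert_space set" and A :: "'a \<Rightarrow> 'a"
    and \<omega>0 :: complex and \<omega> :: "nat \<Rightarrow> nat \<Rightarrow> complex" and \<nu> :: "nat \<Rightarrow> nat"
    and zs :: "nat \<Rightarrow> complex" and N :: nat and \<mu> :: complex
  assumes "linear_op D A" and "closed_op D A"
    and "\<forall>j\<in>{1..N}. \<nu> j > 0"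
    and "inj_on zs {1..N}"
    and "\<forall>j\<in>{1..N}. zs j \<in> resolvent_set D A"
    and "\<mu> \<noteq> \<omega>0"
  shows "is_direct_sum (gen_eigenspace (rat_op D A \<omega>0 \<omega> \<nu> zs N) \<mu>)
           (rat_preimage \<omega>0 \<omega> \<nu> zs N \<mu>) (gen_eigenspace_inf D A)"
proof -
  interpret rational_resolvent D A \<omega>0 \<omega> \<nu> zs N
    using assms(1,5) by unfold_locales (auto simp: resolvent_set_def)
  let ?p = "numer - smult \<mu> denom"
  have "is_direct_sum {u \<in> dom_inf D A. \<exists>n. poly_op A (?p ^ n) u = 0}
      ({z. poly ?p z = 0} - zs ` {1..N}) (gen_eigenspace_on (dom_inf D A) A)"
  proof (rule dom_inf.is_direct_sum_poly_op_kernel)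
    show "?p \<noteq> 0" using numer_minus_denom_nonzero[OF assms(6)] .
    show "inj_on (\<lambda>x. A x - z *\<^sub>C x) (dom_inf D A)"
      if "poly ?p z = 0" "z \<notin> {z. poly ?p z = 0} - zs ` {1..N}" for z
      using that inj_on_A_minus_regular[OF regular_poles] by auto
  qed auto
  then show ?thesis
    by (simp only: gen_eigenspace_r_A[OF assms(6)] rat_preimage_eq_roots gen_eigenspace_inf_eq)
qed

end
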